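(* Let $\Lambda\subset\mathbb{R}^d$ be a full-rank lattice, let $\Delta\in\mathbb{R}^d$, and let $P_\Delta=(\Lambda+\Delta)\cap[0,1)^d$. If $|P_\Delta|\ge 2$, then \[ \rho(P_{\Delta})\le \begin{cases} 2\sqrt{d}\, \rho(\Lambda) & \text{if } h(\Lambda)\ge 1/2,\\ (1+\sqrt{d})\,\rho(\Lambda) & \text{otherwise.}\end{cases} \]
   Context: For a finite point set $P\subset[0,1]^d$ with at least two points: covering radius $h(P)=\sup_{x\in[0,1]^d}\min_{y\in P}\|x-y\|_2$, separation radius $q(P)=\frac12\min_{x,y\in P,\,x\ne y}\|x-y\|_2$, mesh ratio $\rho(P)=h(P)/q(P)$. For a full-rank lattice $\Lambda\subset\mathbb{R}^d$: $h(\Lambda)=\sup_{x\in\mathbb{R}^d}\min_{y\in\Lambda}\|x-y\|_2$, $q(\Lambda)=\frac12\min_{x\in\Lambda\setminus\{0\}}\|x\|_2$, $\rho(\Lambda)=h(\Lambda)/q(\Lambda)$. *)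

theory Defs
  imports "HOL-Analysis.Analysis"
begin

definition lattice_gen :: "'a::euclidean_space set \<Rightarrow> 'a set" where
  "lattice_gen B = {(\<Sum>b\<in>B. of_int (c b) *\<^sub>R b) | c. True}"

definition full_rank_lattice :: "'a::euclidean_space set \<Rightarrow> bool" where
  "full_rank_lattice L \<longleftrightarrow>
     (\<exists>B. independent B \<and> card B = DIM('a) \<and> L = lattice_gen B)"

definition unit_cube_ho :: "'a::euclidean_space set" where
  "unit_cube_ho = {x. \<forall>i\<in>Basis. 0 \<le> x \<bullet> i \<and> x \<bullet> i < 1}"

text \<open>Point set quantities (P finite, at least two points); covering over [0,1]^d.\<close>
definition cov_rad_set :: "'a::euclidean_space set \<Rightarrow> real" where
  "cov_rad_set P = (SUP x\<in>cbox 0 One. INF y\<in>P. dist x y)"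

definition sep_rad_set :: "'a::euclidean_space set \<Rightarrow> real" where
  "sep_rad_set P = Min {dist x y | x y. x \<in> P \<and> y \<in> P \<and> x \<noteq> y} / 2"

definition mesh_ratio_set :: "'a::euclidean_space set \<Rightarrow> real" where
  "mesh_ratio_set P = cov_rad_set P / sep_rad_set P"

definition cov_rad_lat :: "'a::euclidean_space set \<Rightarrow> real" where
  "cov_rad_lat L = (SUP x\<in>UNIV. INF y\<in>L. dist x y)"

definition sep_rad_lat :: "'a::euclidean_space set \<Rightarrow> real" where
  "sep_rad_lat L = Inf (norm ` (L - {0})) / 2"

definition mesh_ratio_lat :: "'a::euclidean_space set \<Rightarrow> real" where
  "mesh_ratio_lat L = cov_rad_lat L / sep_rad_lat L"

end

theory Submission
  imports Defs
begin

text \<open>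
  Distinct points of \<open>P\<^sub>\<Delta>\<close> differ by a nonzero lattice vector, so the separation radius can
  only grow: \<open>q(P\<^sub>\<Delta>) \<ge> q(\<Lambda>) > 0\<close>. For the covering radius, if \<open>h(\<Lambda>) \<ge> 1/2\<close> any single point
  of \<open>P\<^sub>\<Delta>\<close> is within the cube diameter \<open>\<surd>d \<le> 2\<surd>d h(\<Lambda>)\<close> of every \<open>x \<in> [0,1]\<^sup>d\<close>. Otherwise, for
  \<open>h(\<Lambda>) < w \<le> 1/2\<close> pull \<open>x\<close> towards the centre of the cube to a point \<open>x'\<close> with
  \<open>|x - x'| \<le> \<surd>d w\<close> whose \<open>w\<close>-ball lies in \<open>[0,1)\<^sup>d\<close>; a shifted lattice point within \<open>w\<close> of \<open>x'\<close>
  lies in \<open>P\<^sub>\<Delta>\<close> and is within \<open>(1 + \<surd>d) w\<close> of \<open>x\<close>.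
\<close>

lemma lattice_genI: "v = (\<Sum>b\<in>B. of_int (c b) *\<^sub>R b) \<Longrightarrow> v \<in> lattice_gen B"
  unfolding lattice_gen_def by blast

lemma zero_in_lattice_gen: "0 \<in> lattice_gen B"
  by (rule lattice_genI[where c = "\<lambda>_. 0"]) simp

lemma basis_in_lattice_gen:
  assumes "finite B" "b \<in> B"
  shows "b \<in> lattice_gen B"
proof (rule lattice_genI[where c = "\<lambda>x. if x = b then 1 else 0"])
  have "(\<Sum>x\<in>B. of_int (if x = b then 1 else 0 :: int) *\<^sub>R x) = (\<Sum>x\<in>B. if x = b then x else 0)"
    by (intro sum.cong) auto
  then show "b = (\<Sum>x\<in>B. of_int (if x = b then 1 else 0) *\<^sub>R x)"
    using assms by simp
qed

lemma lattice_gen_diff: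
  assumes "u \<in> lattice_gen B" "v \<in> lattice_gen B"
  shows "u - v \<in> lattice_gen B"
proof -
  obtain c where u: "u = (\<Sum>b\<in>B. of_int (c b) *\<^sub>R b)"
    using assms(1) unfolding lattice_gen_def by blast
  obtain c' where v: "v = (\<Sum>b\<in>B. of_int (c' b) *\<^sub>R b)"
    using assms(2) unfolding lattice_gen_def by blast
  show ?thesis
    by (rule lattice_genI[where c = "\<lambda>b. c b - c' b"])
       (simp add: u v sum_subtractf[symmetric] scaleR_diff_left)
qed

lemma full_rank_latticeE:
  fixes L :: "'a::euclidean_space set"
  assumes "full_rank_lattice L"
  obtains B where "independent B" "finite B" "span B = UNIV" "B \<noteq> {}" "L = lattice_gen B"
proof -
  obtain B where B: "independent B" "card B = DIM('a)" "L = lattice_gen B"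
    using assms unfolding full_rank_lattice_def by blast
  then have "finite B" "B \<noteq> {}"
    using DIM_positive[where 'a = 'a] by (auto intro: card_ge_0_finite)
  moreover have "dim B = DIM('a)"
    using B by (simp add: dim_eq_card_independent)
  then have "span B = UNIV"
    by (simp add: dim_eq_full)
  ultimately show ?thesis
    using that B by blast
qed

text \<open>Rounding the coordinates of \<open>x\<close> with respect to \<open>B\<close> down to integers.\<close>

lemma lattice_gen_covering:
  assumes "independent B" "finite B" "span B = UNIV"
  obtains y where "y \<in> lattice_gen B" "dist x y \<le> (\<Sum>b\<in>B. norm b)"
proof -
  define r where "r b = representation B x b" for b
  define y where "y = (\<Sum>b\<in>B. of_int \<lfloor>r b\<rfloor> *\<^sub>R b)"
  have "x = (\<Sum>b\<in>B. r b *\<^sub>R b)"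
    unfolding r_def using assms by (simp add: real_vector.sum_representation_eq)
  then have "x - y = (\<Sum>b\<in>B. frac (r b) *\<^sub>R b)"
    unfolding y_def by (simp add: frac_def sum_subtractf[symmetric] scaleR_diff_left)
  then have "norm (x - y) \<le> (\<Sum>b\<in>B. norm (frac (r b) *\<^sub>R b))"
    by (simp only: norm_sum)
  also have "\<dots> \<le> (\<Sum>b\<in>B. norm b)"
    by (intro sum_mono) (auto intro: mult_left_le_one_le less_imp_le[OF frac_lt_1])
  finally have "dist x y \<le> (\<Sum>b\<in>B. norm b)"
    by (simp add: dist_norm)
  moreover have "y \<in> lattice_gen B"
    unfolding y_def by (rule lattice_genI) simp
  ultimately show ?thesis
    using that by blast
qed

lemma representation_lattice_gen:
  assumes "independent B" "finite B" "span B = UNIV" "b \<in> B"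
  shows "representation B (\<Sum>b'\<in>B. of_int (c b') *\<^sub>R b') b = of_int (c b)"
proof -
  have "representation B (\<Sum>b'\<in>B. of_int (c b') *\<^sub>R b') b
      = (\<Sum>b'\<in>B. of_int (c b') * representation B b' b)"
    using assms by (simp add: real_vector.representation_sum real_vector.representation_scale)
  also have "\<dots> = (\<Sum>b'\<in>B. of_int (c b') * (if b = b' then 1 else 0))"
    using assms(1) by (intro sum.cong) (auto simp: real_vector.representation_basis)
  also have "\<dots> = of_int (c b)"
    using assms(2,4) by (simp add: if_distrib cong: if_cong)
  finally show ?thesis .
qed

text \<open>
  A nonzero lattice vector has a nonzero integer coordinate, and each coordinate is a
  bounded linear function of the vector.
\<close>

lemma lattice_gen_discrete:
  assumes "independent B" "finite B" "span B = UNIV"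
  obtains m where "m > 0" "\<And>v. v \<in> lattice_gen B \<Longrightarrow> v \<noteq> 0 \<Longrightarrow> m \<le> norm v"
proof -
  have "\<exists>K>0. \<forall>v. \<bar>representation B v b\<bar> \<le> K * norm v" for b
  proof -
    have "linear (\<lambda>v. representation B v b)"
      using real_vector.linear_representation[OF assms(1,3)]
      by (simp add: linear_def real_scaleR_def[abs_def])
    then show ?thesis
      by (metis linear_bounded_pos real_norm_def)
  qed
  then obtain K where K: "\<And>b. K b > 0" "\<And>b v. \<bar>representation B v b\<bar> \<le> K b * norm v"
    by metis
  define M where "M = 1 + (\<Sum>b\<in>B. K b)"
  have "M > 0"
    unfolding M_def using K(1) by (simp add: add_pos_nonneg sum_nonneg less_imp_le)
  moreover have "1 / M \<le> norm v" if v_L: "v \<in> lattice_gen B" and "v \<noteq> 0" for v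
  proof -
    obtain c where v: "v = (\<Sum>b\<in>B. of_int (c b) *\<^sub>R b)"
      using v_L unfolding lattice_gen_def by blast
    then obtain b where b: "b \<in> B" "c b \<noteq> 0"
      using \<open>v \<noteq> 0\<close> by (metis (no_types, lifting) of_int_0 scale_zero_left sum.neutral)
    have "1 \<le> \<bar>real_of_int (c b)\<bar>"
      using b(2) by linarith
    also have "\<dots> \<le> K b * norm v"
      using K(2)[of v b] representation_lattice_gen[OF assms b(1)] v by simp
    also have "\<dots> \<le> M * norm v"
      using member_le_sum[of b B K] K(1) assms(2) b(1)
      by (intro mult_right_mono) (auto simp: M_def less_imp_le)
    finally show ?thesis
      using \<open>M > 0\<close> by (simp add: divide_simps mult.commute)
  qed
  ultimately show ?thesis
    using that[of "1 / M"] by simp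
qed

lemma full_rank_lattice_diff:
  "full_rank_lattice L \<Longrightarrow> u \<in> L \<Longrightarrow> v \<in> L \<Longrightarrow> u - v \<in> L"
  by (elim full_rank_latticeE) (simp add: lattice_gen_diff)

lemma infdist_le_cov_rad_lat:
  assumes "full_rank_lattice L"
  shows "infdist x L \<le> cov_rad_lat L"
proof -
  obtain B where B: "independent B" "finite B" "span B = UNIV" and L: "L = lattice_gen B"
    using assms by (rule full_rank_latticeE)
  have "infdist z L \<le> (\<Sum>b\<in>B. norm b)" for z
    using lattice_gen_covering[OF B, of z] L infdist_le2 by metis
  then have "bdd_above (range (\<lambda>z. infdist z L))"
    by (intro bdd_aboveI) blast
  moreover have "L \<noteq> {}"
    using L zero_in_lattice_gen by blast
  ultimately show ?thesis
    unfolding cov_rad_lat_def using cSUP_upper[of x UNIV "\<lambda>z. infdist z L"]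
    by (simp add: infdist_notempty)
qed

lemma cov_rad_lat_nonneg: "full_rank_lattice L \<Longrightarrow> 0 \<le> cov_rad_lat L"
  using infdist_le_cov_rad_lat infdist_nonneg order_trans by blast

lemma full_rank_lattice_point_near:
  assumes "full_rank_lattice L" "cov_rad_lat L < w"
  obtains y where "y \<in> L" "dist x y < w"
proof -
  have "L \<noteq> {}"
    using assms(1) by (elim full_rank_latticeE) (auto intro: zero_in_lattice_gen)
  moreover have "infdist x L < w"
    using infdist_le_cov_rad_lat[OF assms(1)] assms(2) by (rule le_less_trans)
  ultimately show ?thesis
    using that by (auto simp: infdist_notempty cINF_less_iff)
qed

lemma sep_rad_lat_le_norm:
  assumes "v \<in> L" "v \<noteq> 0"
  shows "2 * sep_rad_lat L \<le> norm v"
  using assms unfolding sep_rad_lat_def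
  by (auto intro!: cInf_lower bdd_belowI[of _ 0])

lemma sep_rad_lat_pos:
  assumes "full_rank_lattice L"
  shows "0 < sep_rad_lat L"
proof -
  obtain B where B: "independent B" "finite B" "span B = UNIV" "B \<noteq> {}"
    and L: "L = lattice_gen B"
    using assms by (rule full_rank_latticeE)
  obtain m where "m > 0" and m: "\<And>v. v \<in> L \<Longrightarrow> v \<noteq> 0 \<Longrightarrow> m \<le> norm v"
    using lattice_gen_discrete[OF B(1-3)] L by metis
  obtain b where "b \<in> B"
    using B(4) by blast
  then have "b \<in> L - {0}"
    using L B(1,2) basis_in_lattice_gen real_vector.dependent_zero by blast
  then have "m \<le> Inf (norm ` (L - {0}))"
    using m by (intro cInf_greatest) auto
  then show ?thesis
    unfolding sep_rad_lat_def using \<open>m > 0\<close> by simp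
qed

lemma sep_rad_set_ge:
  assumes "finite P" "card P \<ge> 2"
    and "\<And>x y. x \<in> P \<Longrightarrow> y \<in> P \<Longrightarrow> x \<noteq> y \<Longrightarrow> 2 * r \<le> dist x y"
  shows "r \<le> sep_rad_set P"
proof -
  define S where "S = {dist x y | x y. x \<in> P \<and> y \<in> P \<and> x \<noteq> y}"
  have "S \<subseteq> case_prod dist ` (P \<times> P)"
    unfolding S_def by auto
  then have "finite S"
    using assms(1) by (meson finite_SigmaI finite_imageI finite_subset)
  moreover obtain x y where "x \<in> P" "y \<in> P" "x \<noteq> y"
    using assms(2) by (metis card_le_Suc_iff insert_iff numeral_2_eq_2)
  then have "S \<noteq> {}"
    unfolding S_def by blast
  ultimately have "2 * r \<le> Min S"
    using assms(3) unfolding S_def by (intro Min.boundedI) auto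
  then show ?thesis
    unfolding sep_rad_set_def S_def by simp
qed

lemma sep_rad_lat_le_sep_rad_set:
  assumes "full_rank_lattice L" "finite P" "card P \<ge> 2" "P \<subseteq> (\<lambda>y. y + \<Delta>) ` L"
  shows "sep_rad_lat L \<le> sep_rad_set P"
proof (rule sep_rad_set_ge[OF assms(2,3)])
  fix x y assume "x \<in> P" "y \<in> P" "x \<noteq> y"
  then obtain a b where "a \<in> L" "b \<in> L" "x = a + \<Delta>" "y = b + \<Delta>" "a \<noteq> b"
    using assms(4) by blast
  then show "2 * sep_rad_lat L \<le> dist x y"
    using sep_rad_lat_le_norm[OF full_rank_lattice_diff[OF assms(1)], of a b]
    by (simp add: dist_norm)
qed

lemma cov_rad_set_le:
  assumes "P \<noteq> {}" "\<And>x. x \<in> cbox 0 One \<Longrightarrow> infdist x P \<le> r"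
  shows "cov_rad_set P \<le> r"
  unfolding cov_rad_set_def using assms
  by (intro cSUP_least) (auto simp: infdist_notempty box_ne_empty)

lemma norm_le_sqrt_DIM_componentwise:
  fixes v :: "'a::euclidean_space"
  assumes "\<And>i. i \<in> Basis \<Longrightarrow> \<bar>v \<bullet> i\<bar> \<le> M"
  shows "norm v \<le> sqrt DIM('a) * M"
proof -
  have "infnorm v \<le> M"
    using assms by (simp add: infnorm_Max)
  then show ?thesis
    using norm_le_infnorm[of v] by (meson mult_left_mono order_trans real_sqrt_ge_zero of_nat_0_le_iff)
qed

lemma unit_cube_ho_subset_cbox: "unit_cube_ho \<subseteq> cbox 0 One"
  by (auto simp: unit_cube_ho_def mem_box less_imp_le)

lemma dist_le_sqrt_DIM_unit_cube:
  fixes x y :: "'a::euclidean_space"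
  assumes "x \<in> cbox 0 One" "y \<in> cbox 0 One"
  shows "dist x y \<le> sqrt DIM('a)"
proof -
  have "\<bar>(x - y) \<bullet> i\<bar> \<le> 1" if "i \<in> Basis" for i
  proof -
    have "0 \<le> x \<bullet> i" "x \<bullet> i \<le> 1" "0 \<le> y \<bullet> i" "y \<bullet> i \<le> 1"
      using assms that by (auto simp: mem_box)
    then show ?thesis
      by (simp add: inner_diff_left abs_le_iff)
  qed
  then show ?thesis
    using norm_le_sqrt_DIM_componentwise[of "x - y" 1] by (simp add: dist_norm)
qed

lemma cov_rad_set_le_sqrt_DIM:
  fixes P :: "'a::euclidean_space set"
  assumes "P \<noteq> {}" "P \<subseteq> cbox 0 One"
  shows "cov_rad_set P \<le> sqrt DIM('a)"
proof (rule cov_rad_set_le[OF assms(1)])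
  fix x :: 'a assume "x \<in> cbox 0 One"
  moreover obtain p where "p \<in> P"
    using assms(1) by blast
  ultimately have "dist x p \<le> sqrt DIM('a)"
    using assms(2) by (intro dist_le_sqrt_DIM_unit_cube) auto
  then show "infdist x P \<le> sqrt DIM('a)"
    by (rule infdist_le2[OF \<open>p \<in> P\<close>])
qed

text \<open>
  The witness is the image of \<open>x\<close> under the homothety with ratio \<open>1 - 2w\<close> about the centre
  of the cube, whose coordinates lie in \<open>[w, 1 - w]\<close>.
\<close>

lemma unit_cube_ho_ball_near:
  fixes x :: "'a::euclidean_space"
  assumes "x \<in> cbox 0 One" "0 \<le> w" "w \<le> 1/2"
  obtains x' where "ball x' w \<subseteq> unit_cube_ho" "dist x x' \<le> sqrt DIM('a) * w"
proof -
  define c :: 'a where "c = (1/2) *\<^sub>R One"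
  define x' where "x' = c + (1 - 2 * w) *\<^sub>R (x - c)"
  have x: "0 \<le> x \<bullet> i" "x \<bullet> i \<le> 1" if "i \<in> Basis" for i
    using assms(1) that by (auto simp: mem_box)
  have x'_i: "x' \<bullet> i = w + (1 - 2 * w) * (x \<bullet> i)" if "i \<in> Basis" for i
    using that by (simp add: x'_def c_def inner_add_left inner_diff_left algebra_simps)
  have "ball x' w \<subseteq> unit_cube_ho"
    unfolding unit_cube_ho_def ball_def
  proof (intro subsetI CollectI ballI)
    fix z and i :: 'a assume "z \<in> {z. dist x' z < w}" and i: "i \<in> Basis"
    have "\<bar>z \<bullet> i - x' \<bullet> i\<bar> < w"
      using Basis_le_norm[OF i, of "z - x'"] \<open>z \<in> {z. dist x' z < w}\<close>
      by (simp add: dist_norm norm_minus_commute inner_diff_left)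
    moreover have "0 \<le> (1 - 2 * w) * (x \<bullet> i)" "(1 - 2 * w) * (x \<bullet> i) \<le> 1 - 2 * w"
      using x[OF i] assms(3) by (auto simp: mult_left_le)
    ultimately show "0 \<le> z \<bullet> i \<and> z \<bullet> i < 1"
      using x'_i[OF i] by (auto simp: abs_less_iff)
  qed
  have "norm (x - c) \<le> sqrt DIM('a) * (1/2)"
  proof (rule norm_le_sqrt_DIM_componentwise)
    fix i :: 'a assume i: "i \<in> Basis"
    then have "(x - c) \<bullet> i = x \<bullet> i - 1/2"
      by (simp add: c_def inner_diff_left)
    then show "\<bar>(x - c) \<bullet> i\<bar> \<le> 1/2"
      using x[OF i] by (simp only: abs_le_iff) linarith
  qed
  have "x - x' = (2 * w) *\<^sub>R (x - c)"
    by (simp add: x'_def algebra_simps)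
  then have "dist x x' = 2 * w * norm (x - c)"
    using assms(2) by (simp add: dist_norm)
  also have "\<dots> \<le> 2 * w * (sqrt DIM('a) * (1/2))"
    using \<open>norm (x - c) \<le> sqrt DIM('a) * (1/2)\<close> assms(2) by (intro mult_left_mono) auto
  finally have "dist x x' \<le> sqrt DIM('a) * w"
    by (simp add: mult.commute)
  with \<open>ball x' w \<subseteq> unit_cube_ho\<close> show ?thesis
    by (rule that)
qed

lemma shifted_lattice_point_near:
  fixes L :: "'a::euclidean_space set"
  assumes "full_rank_lattice L" "x \<in> cbox 0 One" "cov_rad_lat L < w" "w \<le> 1/2"
  obtains p where "p \<in> (\<lambda>y. y + \<Delta>) ` L \<inter> unit_cube_ho" "dist x p < (1 + sqrt DIM('a)) * w"
proof -
  have "0 \<le> w"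
    using cov_rad_lat_nonneg[OF assms(1)] assms(3) by linarith
  then obtain x' where x': "ball x' w \<subseteq> unit_cube_ho" "dist x x' \<le> sqrt DIM('a) * w"
    using unit_cube_ho_ball_near[OF assms(2) _ assms(4)] by blast
  obtain y where y: "y \<in> L" "dist (x' - \<Delta>) y < w"
    using full_rank_lattice_point_near[OF assms(1,3)] by blast
  have "dist x' (y + \<Delta>) < w"
    using y(2) by (simp add: dist_norm algebra_simps)
  then have "y + \<Delta> \<in> (\<lambda>y. y + \<Delta>) ` L \<inter> unit_cube_ho"
    using x'(1) y(1) by auto
  moreover have "dist x (y + \<Delta>) < (1 + sqrt DIM('a)) * w"
    using dist_triangle[of x "y + \<Delta>" x'] x'(2) \<open>dist x' (y + \<Delta>) < w\<close>
    by (simp add: algebra_simps)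
  ultimately show ?thesis
    by (rule that)
qed

lemma cov_rad_set_shifted_lattice_le:
  fixes L :: "'a::euclidean_space set"
  assumes "full_rank_lattice L" "cov_rad_lat L < 1/2"
  shows "cov_rad_set ((\<lambda>y. y + \<Delta>) ` L \<inter> unit_cube_ho) \<le> (1 + sqrt DIM('a)) * cov_rad_lat L"
    (is "cov_rad_set ?P \<le> ?C * _")
proof (rule cov_rad_set_le)
  show "?P \<noteq> {}"
    using shifted_lattice_point_near[OF assms(1) _ assms(2), of 0] by (auto simp: mem_box)
next
  fix x :: 'a assume x: "x \<in> cbox 0 One"
  have "?C > 0"
    by (simp add: add_pos_nonneg)
  have "infdist x ?P / ?C \<le> cov_rad_lat L"
  proof (rule dense_ge_bounded[OF assms(2)])
    fix w assume "cov_rad_lat L < w" "w < 1/2"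
    then obtain p where "p \<in> ?P" "dist x p < ?C * w"
      using shifted_lattice_point_near[OF assms(1) x] by (metis less_imp_le)
    then have "infdist x ?P \<le> ?C * w"
      by (meson infdist_le2 less_imp_le)
    then show "infdist x ?P / ?C \<le> w"
      using \<open>?C > 0\<close> by (simp add: divide_le_eq mult.commute)
  qed
  then show "infdist x ?P \<le> ?C * cov_rad_lat L"
    using \<open>?C > 0\<close> by (simp add: divide_le_eq mult.commute)
qed

theorem mainTheorem4:
  fixes L :: "'a::euclidean_space set" and \<Delta> :: 'a
  assumes "full_rank_lattice L"
    and "card ((\<lambda>y. y + \<Delta>) ` L \<inter> unit_cube_ho) \<ge> 2"
  shows "mesh_ratio_set ((\<lambda>y. y + \<Delta>) ` L \<inter> unit_cube_ho)
         \<le> (if cov_rad_lat L \<ge> 1/2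
             then 2 * sqrt (real DIM('a)) * mesh_ratio_lat L
             else (1 + sqrt (real DIM('a))) * mesh_ratio_lat L)"
proof -
  define P where "P = (\<lambda>y. y + \<Delta>) ` L \<inter> unit_cube_ho"
  define C where "C = (if cov_rad_lat L \<ge> 1/2 then 2 * sqrt (real DIM('a)) else 1 + sqrt (real DIM('a)))"
  have P: "finite P" "card P \<ge> 2" "P \<noteq> {}"
    using assms(2) unfolding P_def by (auto intro: card_ge_0_finite)
  have cov: "cov_rad_set P \<le> C * cov_rad_lat L"
  proof (cases "cov_rad_lat L \<ge> 1/2")
    case True
    have "cov_rad_set P \<le> sqrt DIM('a)"
      using P(3) unit_cube_ho_subset_cbox by (intro cov_rad_set_le_sqrt_DIM) (auto simp: P_def)
    also have "\<dots> \<le> C * cov_rad_lat L"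
      using True by (simp add: C_def)
    finally show ?thesis .
  next
    case False
    then show ?thesis
      using cov_rad_set_shifted_lattice_le[OF assms(1)] by (simp add: C_def P_def)
  qed
  have "mesh_ratio_set P \<le> C * cov_rad_lat L / sep_rad_lat L"
    unfolding mesh_ratio_set_def
    using cov sep_rad_lat_pos[OF assms(1)] cov_rad_lat_nonneg[OF assms(1)]
      sep_rad_lat_le_sep_rad_set[OF assms(1) P(1,2)]
    by (intro frac_le) (auto simp: C_def P_def)
  then have "mesh_ratio_set P \<le> C * mesh_ratio_lat L"
    by (simp add: mesh_ratio_lat_def)
  then show ?thesis
    by (cases "cov_rad_lat L \<ge> 1/2") (simp_all add: C_def P_def)
qed

end
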